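(* Let $\beta\in(0,\tfrac12)$, let $\lambda$ be an eigenvalue of $\Delta_\beta$, and let $\theta\in\mathcal{A}_\beta$. Then $\lambda\ge\theta$.
   Context: Tree: for an integer $m\ge2$, $\mathbb{T}_m$ has vertices the root $\emptyset$ and all finite sequences $(\emptyset,a_1,\dots,a_k)$, $a_i\in\{0,\dots,m-1\}$; $|x|$ is the level, successors of $x$ are $(x,i)$, $\hat x$ is the immediate predecessor of $x\ne\emptyset$. A branch is an infinite sequence $(x_n)_{n\ge0}$ with $x_0=\emptyset$, $x_{n+1}$ a successor of $x_n$; $\lim_{x\to y}u(x)=\lim_n u(x_n)$ for a branch $y=(x_n)$. Operator: $p_\beta=\beta/(1-\beta)$ for $\beta\in(0,1)$. $\Delta_\beta u(\emptyset)=\frac1m\sum_{i=0}^{m-1}u(\emptyset,i)-u(\emptyset)$ and, for $x\ne\emptyset$, $\Delta_\beta u(x)=\big(\beta u(\hat x)+\frac{1-\beta}{m}\sum_{i=0}^{m-1}u(x,i)-u(x)\big)p_\beta^{-|x|}$. Eigenvalues: $\lambda\in\mathbb{R}$ is an eigenvalue of $\Delta_\beta$ if there is a bounded $u\not\equiv0$ with $-\Delta_\beta u=\lambda u$ on $\mathbb{T}_m$ and $\lim_{x\to y}u(x)=0$ for every branch $y$. $\mathcal{A}_\beta=\{\lambda>0:\exists v:\mathbb{T}_m\to\mathbb{R}\text{ and constants }0<c<C\text{ with } c<v<C \text{ and } \Delta_\beta v+\lambda v\le0 \text{ on }\mathbb{T}_m\}$. *)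

theory Defs
  imports "HOL-Analysis.Analysis"
begin

text \<open>Vertices of the m-ary tree T_m: the vertex (root, a_1, ..., a_k) is encoded as the
  list [a_1, ..., a_k] with all a_i < m; the root is the empty list. The level |x| is the
  length, the i-th successor of x is x @ [i], and the predecessor of x is butlast x.\<close>

definition vertices :: "nat \<Rightarrow> nat list set" where
  "vertices m = {xs. \<forall>a\<in>set xs. a < m}"

definition p_beta :: "real \<Rightarrow> real" where
  "p_beta \<beta> = \<beta> / (1 - \<beta>)"

definition Delta :: "nat \<Rightarrow> real \<Rightarrow> (nat list \<Rightarrow> real) \<Rightarrow> nat list \<Rightarrow> real" where
  "Delta m \<beta> u x =
     (if x = [] then (1 / real m) * (\<Sum>i<m. u [i]) - u []
      else (\<beta> * u (butlast x) + ((1 - \<beta>) / real m) * (\<Sum>i<m. u (x @ [i])) - u x)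
           / (p_beta \<beta>) ^ length x)"

text \<open>A branch is given by a sequence b of digits b n < m; its n-th vertex is
  map b [0..<n]. The limit of u along the branch is the limit of u at these vertices.\<close>

definition is_branch :: "nat \<Rightarrow> (nat \<Rightarrow> nat) \<Rightarrow> bool" where
  "is_branch m b \<longleftrightarrow> (\<forall>n. b n < m)"

definition is_eigenvalue :: "nat \<Rightarrow> real \<Rightarrow> real \<Rightarrow> bool" where
  "is_eigenvalue m \<beta> lam \<longleftrightarrow>
     (\<exists>u :: nat list \<Rightarrow> real.
        (\<exists>C. \<forall>x\<in>vertices m. \<bar>u x\<bar> \<le> C)
      \<and> (\<exists>x\<in>vertices m. u x \<noteq> 0)
      \<and> (\<forall>x\<in>vertices m. - Delta m \<beta> u x = lam * u x)
      \<and> (\<forall>b. is_branch m b \<longrightarrow> (\<lambda>n. u (map b [0..<n])) \<longlonglongrightarrow> 0))"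

definition A_set :: "nat \<Rightarrow> real \<Rightarrow> real set" where
  "A_set m \<beta> = {lam. lam > 0 \<and>
     (\<exists>v :: nat list \<Rightarrow> real. \<exists>c C. 0 < c \<and> c < C \<and>
        (\<forall>x\<in>vertices m. c < v x \<and> v x < C \<and> Delta m \<beta> v x + lam * v x \<le> 0))}"

end

theory Submission
  imports Defs
begin

text \<open>Suppose \<open>lam < \<theta>\<close>; let \<open>u\<close> be an eigenfunction for \<open>lam\<close> and \<open>v\<close> a supersolution for
  \<open>\<theta>\<close> with \<open>v > c > 0\<close>. Up to a positive factor, \<open>\<Delta>\<^sub>\<beta> u x\<close> is a weighted mean of \<open>u\<close> over
  the neighbours of \<open>x\<close> minus \<open>u x\<close>, so comparing the two equations shows that \<open>u / v\<close> has no
  positive local maximum: wherever \<open>u > 0\<close>, some neighbour has a strictly larger ratio. A walk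
  climbing these ratios never returns to the vertex it just left, so after finitely many steps
  towards the root it moves away from the root forever, i.e. it runs down a branch. Along that
  branch \<open>u \<ge> (u x\<^sub>0 / v x\<^sub>0) c > 0\<close>, contradicting \<open>u \<rightarrow> 0\<close>. Hence \<open>u \<le> 0\<close>, and by symmetry
  \<open>u = 0\<close>.\<close>

definition tree_neighbour :: "nat \<Rightarrow> nat list \<Rightarrow> nat list \<Rightarrow> bool" where
  "tree_neighbour m x y \<longleftrightarrow> (x \<noteq> [] \<and> y = butlast x) \<or> (\<exists>i<m. y = x @ [i])"

definition tree_mean :: "nat \<Rightarrow> real \<Rightarrow> (nat list \<Rightarrow> real) \<Rightarrow> nat list \<Rightarrow> real" where
  "tree_mean m \<beta> u x =
     (if x = [] then (1 / real m) * (\<Sum>i<m. u [i])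
      else \<beta> * u (butlast x) + ((1 - \<beta>) / real m) * (\<Sum>i<m. u (x @ [i])))"

lemma tree_neighbour_in_vertices:
  "x \<in> vertices m \<Longrightarrow> tree_neighbour m x y \<Longrightarrow> y \<in> vertices m"
  unfolding vertices_def tree_neighbour_def by (auto dest: in_set_butlastD)

lemma Delta_eq_tree_mean:
  "Delta m \<beta> u x = (tree_mean m \<beta> u x - u x) / p_beta \<beta> ^ length x"
  by (simp add: Delta_def tree_mean_def)

lemma tree_mean_scale: "tree_mean m \<beta> (\<lambda>y. t * u y) x = t * tree_mean m \<beta> u x"
  by (simp add: tree_mean_def sum_distrib_left algebra_simps)

lemma tree_mean_mono:
  assumes "0 \<le> \<beta>" "\<beta> \<le> 1" and "\<And>y. tree_neighbour m x y \<Longrightarrow> u y \<le> w y"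
  shows "tree_mean m \<beta> u x \<le> tree_mean m \<beta> w x"
proof -
  have children: "(\<Sum>i<m. u (x @ [i])) \<le> (\<Sum>i<m. w (x @ [i]))"
    by (intro sum_mono assms(3)) (auto simp: tree_neighbour_def)
  show ?thesis
  proof (cases "x = []")
    case True
    then show ?thesis using children by (simp add: tree_mean_def divide_right_mono)
  next
    case False
    then have "u (butlast x) \<le> w (butlast x)" by (simp add: assms(3) tree_neighbour_def)
    moreover have
      "(1 - \<beta>) / real m * (\<Sum>i<m. u (x @ [i])) \<le> (1 - \<beta>) / real m * (\<Sum>i<m. w (x @ [i]))"
      using children assms(2) by (intro mult_left_mono) auto
    ultimately show ?thesis
      using False assms(1) unfolding tree_mean_def by (simp add: add_mono mult_left_mono)
  qed
qed

lemma Delta_uminus: "Delta m \<beta> (\<lambda>y. - u y) x = - Delta m \<beta> u x"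
  using tree_mean_scale[of m \<beta> "-1" u x] by (simp add: Delta_eq_tree_mean divide_simps)

lemma supersolution_comparison:
  assumes "0 < \<beta>" "\<beta> < 1"
    and v: "Delta m \<beta> v x + \<theta> * v x \<le> 0" and u: "- Delta m \<beta> u x = lam * u x"
    and below: "\<And>y. tree_neighbour m x y \<Longrightarrow> u y \<le> t * v y"
    and at_x: "u x = t * v x" and "0 \<le> t" and "0 < u x"
  shows "\<theta> \<le> lam"
proof -
  define P where "P = p_beta \<beta> ^ length x"
  have "0 < P" using assms(1,2) by (simp add: P_def p_beta_def)
  have u_mean: "tree_mean m \<beta> u x - u x = - (lam * P * u x)"
    using u \<open>0 < P\<close> unfolding Delta_eq_tree_mean P_def[symmetric] by (simp add: field_simps)
  have v_mean: "tree_mean m \<beta> v x - v x \<le> - (\<theta> * P * v x)"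
    using v \<open>0 < P\<close> unfolding Delta_eq_tree_mean P_def[symmetric] by (simp add: field_simps)
  have "tree_mean m \<beta> u x \<le> t * tree_mean m \<beta> v x"
    using tree_mean_mono[of \<beta> m x u "\<lambda>y. t * v y"] below assms(1,2)
    by (simp add: tree_mean_scale)
  then have "- (lam * P * u x) \<le> t * (tree_mean m \<beta> v x - v x)"
    using u_mean at_x by (simp add: algebra_simps)
  also have "\<dots> \<le> - (\<theta> * P * u x)"
    using mult_left_mono[OF v_mean \<open>0 \<le> t\<close>] at_x by (simp add: algebra_simps)
  finally have "\<theta> * (P * u x) \<le> lam * (P * u x)" by (simp add: algebra_simps)
  then show ?thesis using \<open>0 < P\<close> \<open>0 < u x\<close> by simp
qed

lemma ratio_ascends_at_positive_vertex:
  assumes "0 < \<beta>" "\<beta> < 1" and "lam < \<theta>"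
    and v_pos: "\<forall>x\<in>vertices m. 0 < v x"
    and v: "\<forall>x\<in>vertices m. Delta m \<beta> v x + \<theta> * v x \<le> 0"
    and u: "\<forall>x\<in>vertices m. - Delta m \<beta> u x = lam * u x"
    and x: "x \<in> vertices m" and "0 < u x"
  shows "\<exists>y\<in>vertices m. tree_neighbour m x y \<and> u x / v x < u y / v y"
proof (rule ccontr)
  assume no_ascent: "\<not> ?thesis"
  have "0 < v x" using v_pos x by blast
  have "\<theta> \<le> lam"
  proof (rule supersolution_comparison[OF assms(1,2)])
    show "Delta m \<beta> v x + \<theta> * v x \<le> 0" "- Delta m \<beta> u x = lam * u x"
      using v u x by auto
    show "u x = u x / v x * v x" "0 \<le> u x / v x"
      using \<open>0 < v x\<close> \<open>0 < u x\<close> by auto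
    show "u y \<le> u x / v x * v y" if "tree_neighbour m x y" for y
    proof -
      have "y \<in> vertices m" using tree_neighbour_in_vertices[OF x that] .
      with no_ascent that v_pos show ?thesis by (auto simp: not_less pos_divide_le_eq)
    qed
  qed (fact \<open>0 < u x\<close>)
  with \<open>lam < \<theta>\<close> show False by simp
qed

lemma non_backtracking_walk_eventually_descends:
  assumes step: "\<And>n. tree_neighbour m (s n) (s (Suc n))"
    and no_backtrack: "\<And>n. s (Suc (Suc n)) \<noteq> s n"
  shows "\<exists>N. \<forall>n\<ge>N. \<exists>i. s (Suc n) = s n @ [i]"
proof -
  define descends where "descends n \<longleftrightarrow> (\<exists>i. s (Suc n) = s n @ [i])" for n
  have ascends: "s n \<noteq> [] \<and> s (Suc n) = butlast (s n)" if "\<not> descends n" for n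
    using step[of n] that by (auto simp: tree_neighbour_def descends_def)
  have descends_Suc: "descends (Suc n)" if down: "descends n" for n
  proof (rule ccontr)
    assume "\<not> descends (Suc n)"
    then have "s (Suc (Suc n)) = butlast (s (Suc n))" using ascends by blast
    moreover obtain i where "s (Suc n) = s n @ [i]" using down unfolding descends_def by blast
    ultimately show False using no_backtrack[of n] by simp
  qed
  have "\<exists>N. descends N"
  proof (rule ccontr)
    assume "\<nexists>N. descends N"
    then have "length (s n) + n \<le> length (s 0)" for n
    proof (induction n)
      case (Suc n)
      then show ?case using ascends[of n] by (cases "s n") auto
    qed simp
    from this[of "Suc (length (s 0))"] show False by simp
  qed
  then obtain N where N: "descends N" ..
  have "descends n" if "N \<le> n" for n
    using that by (induction n rule: dec_induct) (use N descends_Suc in auto)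
  then show ?thesis unfolding descends_def by blast
qed

lemma descending_walk_follows_branch:
  assumes descends: "\<And>n. N \<le> n \<Longrightarrow> \<exists>i. s (Suc n) = s n @ [i]"
  shows "\<exists>b. \<forall>j. s (N + j) = map b [0..<length (s N) + j]"
proof -
  have extends: "\<exists>ds. s (N + j + d) = s (N + j) @ ds \<and> length ds = d" for j d
  proof (induction d)
    case (Suc d)
    then obtain ds where "s (N + j + d) = s (N + j) @ ds" "length ds = d" by blast
    moreover obtain i where "s (Suc (N + j + d)) = s (N + j + d) @ [i]" using descends by force
    ultimately show ?case by (intro exI[of _ "ds @ [i]"]) simp
  qed simp
  have length: "length (s (N + j)) = length (s N) + j" for j
    using extends[of 0 j] by auto
  define b where "b k = s (N + Suc k) ! k" for k
  have "s (N + j) = map b [0..<length (s N) + j]" for j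
  proof (rule nth_equalityI)
    show "length (s (N + j)) = length (map b [0..<length (s N) + j])" by (simp add: length)
  next
    fix k assume k: "k < length (s (N + j))"
    obtain ds ds' where ds: "s (N + j + Suc k) = s (N + j) @ ds"
      and ds': "s (N + j + Suc k) = s (N + Suc k) @ ds'"
      using extends[of j "Suc k"] extends[of "Suc k" j] by (auto simp: add_ac)
    have "s (N + j) ! k = s (N + j + Suc k) ! k" using ds k by (simp add: nth_append)
    also have "\<dots> = s (N + Suc k) ! k" using ds' length[of "Suc k"] by (simp add: nth_append)
    finally have "s (N + j) ! k = s (N + Suc k) ! k" .
    then show "s (N + j) ! k = map b [0..<length (s N) + j] ! k"
      using k by (simp add: b_def length)
  qed
  then show ?thesis by blast
qed

lemma eigenfunction_nonpos_if_eigenvalue_less: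
  assumes "0 < \<beta>" "\<beta> < 1" and "lam < \<theta>" and "0 < c"
    and v: "\<forall>x\<in>vertices m. c < v x \<and> Delta m \<beta> v x + \<theta> * v x \<le> 0"
    and u: "\<forall>x\<in>vertices m. - Delta m \<beta> u x = lam * u x"
    and decay: "\<forall>b. is_branch m b \<longrightarrow> (\<lambda>n. u (map b [0..<n])) \<longlonglongrightarrow> 0"
    and x0: "x0 \<in> vertices m"
  shows "u x0 \<le> 0"
proof (rule ccontr)
  assume "\<not> u x0 \<le> 0"
  define f where "f x = u x / v x" for x
  have v_pos: "\<forall>x\<in>vertices m. 0 < v x" using v \<open>0 < c\<close> by force
  have u_pos: "0 < u x" if "x \<in> vertices m" "0 < f x" for x
    using v_pos that by (auto simp: f_def zero_less_divide_iff)
  have "0 < f x0" using \<open>\<not> u x0 \<le> 0\<close> v_pos x0 by (simp add: f_def)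
  have "\<forall>x. \<exists>y. x \<in> vertices m \<and> 0 < u x \<longrightarrow> y \<in> vertices m \<and> tree_neighbour m x y \<and> f x < f y"
    using ratio_ascends_at_positive_vertex[OF assms(1-3) v_pos] v u unfolding f_def by blast
  then obtain g where g: "\<And>x. x \<in> vertices m \<Longrightarrow> 0 < u x \<Longrightarrow>
      g x \<in> vertices m \<and> tree_neighbour m x (g x) \<and> f x < f (g x)"
    by metis
  define s where "s n = (g ^^ n) x0" for n
  have walk: "s n \<in> vertices m \<and> f x0 \<le> f (s n)" for n
  proof (induction n)
    case (Suc n)
    with g[of "s n"] u_pos[of "s n"] \<open>0 < f x0\<close> show ?case by (force simp: s_def)
  qed (simp add: s_def x0)
  have step: "tree_neighbour m (s n) (s (Suc n)) \<and> f (s n) < f (s (Suc n))" for n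
    using g[of "s n"] u_pos[of "s n"] walk[of n] \<open>0 < f x0\<close> by (force simp: s_def)
  have "s (Suc (Suc n)) \<noteq> s n" for n
    using step[of n] step[of "Suc n"] by force
  then obtain N where "\<forall>n\<ge>N. \<exists>i. s (Suc n) = s n @ [i]"
    using non_backtracking_walk_eventually_descends step by blast
  then obtain b where b: "\<And>j. s (N + j) = map b [0..<length (s N) + j]"
    using descending_walk_follows_branch by blast
  have "is_branch m b"
    unfolding is_branch_def
  proof
    fix k
    have "map b [0..<length (s N) + Suc k] \<in> vertices m" using walk b by metis
    then show "b k < m" by (auto simp: vertices_def)
  qed
  with decay have "(\<lambda>n. u (map b [0..<n])) \<longlonglongrightarrow> 0" by blast
  then have "(\<lambda>j. u (map b [0..<j + length (s N)])) \<longlonglongrightarrow> 0"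
    by (rule LIMSEQ_ignore_initial_segment)
  then have "(\<lambda>j. u (s (N + j))) \<longlonglongrightarrow> 0" unfolding b by (simp only: add.commute)
  moreover have "f x0 * c \<le> u (s (N + j))" for j
  proof -
    have "s (N + j) \<in> vertices m" "f x0 \<le> f (s (N + j))" using walk by auto
    with v \<open>0 < f x0\<close> \<open>0 < c\<close> have "f x0 * c \<le> f (s (N + j)) * v (s (N + j))"
      by (intro mult_mono) auto
    also have "\<dots> = u (s (N + j))"
      using v_pos \<open>s (N + j) \<in> vertices m\<close> by (simp add: f_def less_imp_neq[symmetric])
    finally show ?thesis .
  qed
  ultimately have "f x0 * c \<le> 0" by (intro LIMSEQ_le_const) auto
  with \<open>0 < f x0\<close> \<open>0 < c\<close> show False by (simp add: mult_le_0_iff)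
qed

theorem lemma5p2:
  fixes m :: nat and \<beta> lam \<theta> :: real
  assumes "m \<ge> 2"
    and "0 < \<beta>" and "\<beta> < 1 / 2"
    and "is_eigenvalue m \<beta> lam"
    and "\<theta> \<in> A_set m \<beta>"
  shows "lam \<ge> \<theta>"
proof (rule ccontr)
  assume "\<not> lam \<ge> \<theta>"
  then have "lam < \<theta>" by simp
  have "\<beta> < 1" using assms(3) by simp
  obtain u where u: "\<forall>x\<in>vertices m. - Delta m \<beta> u x = lam * u x"
    and decay: "\<forall>b. is_branch m b \<longrightarrow> (\<lambda>n. u (map b [0..<n])) \<longlonglongrightarrow> 0"
    and "\<exists>x\<in>vertices m. u x \<noteq> 0"
    using assms(4) unfolding is_eigenvalue_def by blast
  then obtain x0 where x0: "x0 \<in> vertices m" and "u x0 \<noteq> 0" by blast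
  obtain v c where "0 < c" and v: "\<forall>x\<in>vertices m. c < v x \<and> Delta m \<beta> v x + \<theta> * v x \<le> 0"
    using assms(5) unfolding A_set_def by blast
  note nonpos =
    eigenfunction_nonpos_if_eigenvalue_less[OF assms(2) \<open>\<beta> < 1\<close> \<open>lam < \<theta>\<close> \<open>0 < c\<close> v]
  have "u x0 \<le> 0" using nonpos[OF u decay x0] .
  moreover have "- u x0 \<le> 0"
  proof (rule nonpos[of "\<lambda>y. - u y", OF _ _ x0])
    show "\<forall>x\<in>vertices m. - Delta m \<beta> (\<lambda>y. - u y) x = lam * - u x"
      using u by (simp add: Delta_uminus)
    show "\<forall>b. is_branch m b \<longrightarrow> (\<lambda>n. - u (map b [0..<n])) \<longlonglongrightarrow> 0"
      using decay tendsto_minus[of _ 0] by force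
  qed
  ultimately show False using \<open>u x0 \<noteq> 0\<close> by simp
qed

end
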